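(* Let $W\subseteq\mathbb{R}^d$ be open, bounded, convex, inner regular with $0\in W$, and $h>1$. Define $v_0=h\,\mathbf 1_{hW}$ on $\mathbb{Z}^d$ and $v_{k+1}=v_k+(2d)^{-1}\max\{0,\Delta v_k-\mathbf 1_{\{v_k=0\}}\}$. Then $v_k$ converges pointwise as $k\to\infty$ to $u_h$, the least function $u:\mathbb{Z}^d\to\mathbb{R}$ satisfying $u\ge h\mathbf 1_{hW}$ and $\Delta u\le\mathbf 1_{\{u=0\}}$.
   Context: Discrete Laplacian: $\Delta u(x)=\sum_{i=1}^d(u(x+e_i)+u(x-e_i)-2u(x))$. $W$ inner regular means for some $r>0$ every $x\in\partial W$ lies on $\partial B_r(y)$ with $B_r(y)\subseteq W$. *)

theory Defs
  imports "HOL-Analysis.Analysis"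
begin

text \<open>The lattice Z^d is modelled as int ^ 'd, with R^d = real ^ 'd and d = CARD('d).\<close>

definition unit_vec :: "'d::finite \<Rightarrow> int ^ 'd" where
  "unit_vec i = (\<chi> j. if j = i then 1 else 0)"

definition dlaplacian :: "(int ^ 'd::finite \<Rightarrow> real) \<Rightarrow> int ^ 'd \<Rightarrow> real" where
  "dlaplacian u x = (\<Sum>i\<in>UNIV. u (x + unit_vec i) + u (x - unit_vec i) - 2 * u x)"

definition lattice_emb :: "int ^ 'd::finite \<Rightarrow> real ^ 'd" where
  "lattice_emb x = (\<chi> i. real_of_int (x $ i))"

definition inner_regular :: "(real ^ 'd::finite) set \<Rightarrow> bool" where
  "inner_regular W \<longleftrightarrow> (\<exists>r>0. \<forall>x\<in>frontier W. \<exists>y. x \<in> sphere y r \<and> ball y r \<subseteq> W)"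

definition indic :: "bool \<Rightarrow> real" where
  "indic b = (if b then 1 else 0)"

definition init_fun :: "(real ^ 'd::finite) set \<Rightarrow> real \<Rightarrow> int ^ 'd \<Rightarrow> real" where
  "init_fun W h x = h * indic (lattice_emb x \<in> (\<lambda>w. h *\<^sub>R w) ` W)"

definition step_fun :: "(int ^ 'd::finite \<Rightarrow> real) \<Rightarrow> int ^ 'd \<Rightarrow> real" where
  "step_fun v x = v x + (1 / (2 * real CARD('d))) * max 0 (dlaplacian v x - indic (v x = 0))"

primrec iter_seq :: "(real ^ 'd::finite) set \<Rightarrow> real \<Rightarrow> nat \<Rightarrow> int ^ 'd \<Rightarrow> real" where
  "iter_seq W h 0 = init_fun W h"
| "iter_seq W h (Suc k) = step_fun (iter_seq W h k)"

definition admissible :: "(real ^ 'd::finite) set \<Rightarrow> real \<Rightarrow> (int ^ 'd \<Rightarrow> real) \<Rightarrow> bool" where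
  "admissible W h u \<longleftrightarrow> (\<forall>x. u x \<ge> init_fun W h x) \<and> (\<forall>x. dlaplacian u x \<le> indic (u x = 0))"

end

theory Submission
  imports Defs
begin

text \<open>The iterates increase, since each step adds a nonnegative amount. With the step size
  \<open>1/(2d)\<close>, the update at \<open>x\<close> is dominated by every admissible \<open>w \<ge> v\<close>: at \<open>x\<close> the
  Laplacian of \<open>v\<close> exceeds that of \<open>w\<close> by at most \<open>2d(w x - v x)\<close>. So by induction every
  iterate lies below every admissible function, in particular below the admissible constant
  \<open>h\<close>. The bounded increasing iterates converge to their supremum, which is therefore below
  every admissible function; and it is a fixed point of the step map, whose fixed points are
  exactly the functions with \<open>\<Delta>u \<le> 1{u = 0}\<close>.\<close>

lemma dlaplacian_const [simp]: "dlaplacian (\<lambda>_. c) x = 0"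
  by (simp add: dlaplacian_def)

lemma dlaplacian_le_of_le:
  fixes v w :: "int ^ 'd::finite \<Rightarrow> real"
  assumes "\<And>y. v y \<le> w y"
  shows "dlaplacian v x \<le> dlaplacian w x + 2 * real CARD('d) * (w x - v x)"
proof -
  have "dlaplacian v x \<le>
      (\<Sum>i\<in>UNIV. (w (x + unit_vec i) + w (x - unit_vec i) - 2 * w x) + 2 * (w x - v x))"
    unfolding dlaplacian_def by (rule sum_mono) (use assms in \<open>smt (verit)\<close>)
  also have "\<dots> = dlaplacian w x + 2 * real CARD('d) * (w x - v x)"
    by (simp add: dlaplacian_def sum.distrib sum_subtractf algebra_simps)
  finally show ?thesis .
qed

lemma dlaplacian_tendsto:
  fixes v :: "nat \<Rightarrow> int ^ 'd::finite \<Rightarrow> real"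
  assumes "\<And>y. (\<lambda>k. v k y) \<longlonglongrightarrow> L y"
  shows "(\<lambda>k. dlaplacian (v k) x) \<longlonglongrightarrow> dlaplacian L x"
  unfolding dlaplacian_def
  by (intro tendsto_sum tendsto_diff tendsto_add tendsto_mult tendsto_const assms)

lemma step_fun_ge: "v x \<le> step_fun v x"
  by (simp add: step_fun_def)

lemma step_fun_eq_iff: "step_fun v x = v x \<longleftrightarrow> dlaplacian v x \<le> indic (v x = 0)"
  by (auto simp: step_fun_def max_def)

lemma step_fun_le:
  fixes v w :: "int ^ 'd::finite \<Rightarrow> real"
  assumes le: "\<And>y. v y \<le> w y" and nonneg: "0 \<le> v x"
    and super: "dlaplacian w x \<le> indic (w x = 0)"
  shows "step_fun v x \<le> w x"
proof -
  define n where "n = real CARD('d)"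
  define I where "I = indic (v x = 0)"
  have n: "n \<ge> 1" unfolding n_def by simp
  have "dlaplacian w x \<le> I"
  proof (cases "w x = 0")
    case True
    then have "v x = 0" using le[of x] nonneg by simp
    then show ?thesis using super True by (simp add: I_def)
  next
    case False
    then show ?thesis using super by (simp add: I_def indic_def)
  qed
  moreover have "dlaplacian v x \<le> dlaplacian w x + 2 * n * (w x - v x)"
    unfolding n_def using dlaplacian_le_of_le[OF le] .
  ultimately have "max 0 (dlaplacian v x - I) \<le> 2 * n * (w x - v x)"
    using n le[of x] by simp
  then have "(1 / (2 * n)) * max 0 (dlaplacian v x - I) \<le> w x - v x"
    using n by (simp add: field_simps)
  then show ?thesis unfolding step_fun_def I_def n_def by simp
qed

lemma admissible_const: "h \<ge> 0 \<Longrightarrow> admissible W h (\<lambda>_. h)"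
  by (simp add: admissible_def init_fun_def indic_def)

lemma iter_seq_nonneg: "h \<ge> 0 \<Longrightarrow> 0 \<le> iter_seq W h k x"
proof (induction k arbitrary: x)
  case 0
  then show ?case by (simp add: init_fun_def indic_def)
next
  case (Suc k)
  then show ?case using Suc.IH[of x] by (simp add: step_fun_def)
qed

lemma iter_seq_incseq: "incseq (\<lambda>k. iter_seq W h k x)"
  by (rule incseq_SucI) (simp add: step_fun_ge)

lemma iter_seq_le_admissible:
  assumes "h \<ge> 0" and "admissible W h w"
  shows "iter_seq W h k x \<le> w x"
proof (induction k arbitrary: x)
  case 0
  then show ?case using assms(2) by (simp add: admissible_def)
next
  case (Suc k)
  have "dlaplacian w x \<le> indic (w x = 0)"
    using assms(2) by (simp add: admissible_def)
  then show ?case using step_fun_le[OF Suc.IH iter_seq_nonneg[OF assms(1)]] by simp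
qed

text \<open>The map \<open>u \<mapsto> 1{u = 0}\<close> is discontinuous, but along nonnegative sequences approaching
  their limit from below it is eventually constant.\<close>

lemma tendsto_indic_eq_zero:
  fixes a :: "nat \<Rightarrow> real"
  assumes lim: "a \<longlonglongrightarrow> l" and "\<And>k. 0 \<le> a k" and "\<And>k. a k \<le> l"
  shows "(\<lambda>k. indic (a k = 0)) \<longlonglongrightarrow> indic (l = 0)"
proof (cases "l = 0")
  case True
  then show ?thesis using assms(2,3) by (simp add: order_antisym)
next
  case False
  have "0 \<le> l" using assms(2,3) order_trans by blast
  with False have "l > 0" by simp
  then have "eventually (\<lambda>k. a k > 0) sequentially" using order_tendstoD(1)[OF lim] by blast
  then have "eventually (\<lambda>k. indic (a k = 0) = indic (l = 0)) sequentially"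
    by eventually_elim (use False in \<open>simp add: indic_def\<close>)
  then show ?thesis by (rule tendsto_eventually)
qed

lemma step_fun_limit_fixed:
  fixes v :: "nat \<Rightarrow> int ^ 'd::finite \<Rightarrow> real"
  assumes lim: "\<And>y. (\<lambda>k. v k y) \<longlonglongrightarrow> L y"
    and bounds: "\<And>k y. 0 \<le> v k y" "\<And>k y. v k y \<le> L y"
    and step: "\<And>k. v (Suc k) = step_fun (v k)"
  shows "step_fun L x = L x"
proof (rule LIMSEQ_unique)
  show "(\<lambda>k. step_fun (v k) x) \<longlonglongrightarrow> step_fun L x"
    unfolding step_fun_def
    by (intro tendsto_add tendsto_mult tendsto_max tendsto_diff tendsto_const
        lim dlaplacian_tendsto tendsto_indic_eq_zero bounds)
  show "(\<lambda>k. step_fun (v k) x) \<longlonglongrightarrow> L x"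
    using LIMSEQ_Suc[OF lim[of x]] by (simp add: step)
qed

theorem mainTheorem15:
  fixes W :: "(real ^ 'd::finite) set" and h :: real
  assumes "open W" and "bounded W" and "convex W" and "inner_regular W" and "0 \<in> W"
    and "h > 1"
  shows "\<exists>u. admissible W h u \<and> (\<forall>w. admissible W h w \<longrightarrow> (\<forall>x. u x \<le> w x))
            \<and> (\<forall>x. (\<lambda>k. iter_seq W h k x) \<longlonglongrightarrow> u x)"
proof -
  have h: "h \<ge> 0" using \<open>h > 1\<close> by simp
  define L where "L x = (SUP k. iter_seq W h k x)" for x
  have bdd: "bdd_above (range (\<lambda>k. iter_seq W h k x))" for x
    using iter_seq_le_admissible[OF h admissible_const[OF h]] by (intro bdd_aboveI) auto
  have lim: "(\<lambda>k. iter_seq W h k x) \<longlonglongrightarrow> L x" for x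
    unfolding L_def by (rule LIMSEQ_incseq_SUP[OF bdd iter_seq_incseq])
  have below: "iter_seq W h k x \<le> L x" for k x
    unfolding L_def by (rule cSUP_upper[OF _ bdd]) simp
  have "step_fun L x = L x" for x
    by (rule step_fun_limit_fixed[OF lim iter_seq_nonneg[OF h] below]) simp
  then have "admissible W h L"
    using below[of 0] by (simp add: admissible_def step_fun_eq_iff[symmetric])
  moreover have "L x \<le> w x" if "admissible W h w" for w x
    unfolding L_def using iter_seq_le_admissible[OF h that] by (intro cSUP_least) auto
  ultimately show ?thesis using lim by blast
qed

end
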